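(* Let $T$ be a skew-nontrivial tree. Then the following are equivalent: (1) $\mathrm{Z}_-(T)=1$; (2) $SD_2(T)$ is a tree; (3) $T$ is the 1-subdivision of a tree; (4) $T$ is the 1-subdivision of $SD_2(T)$.
   Context: Skew forcing: vertices are colored blue or white; if any vertex $u$ (blue or white) has exactly one white neighbor $v$, then $u$ may force $v$ to become blue; a skew forcing set is a set of initially blue vertices from which repeated forcing turns all vertices blue, and $\mathrm{Z}_-(G)$ is the minimum size of one. $B^{\emptyset}_-(T)$ is the set of vertices that become blue when the skew forcing rule is applied starting from the empty set until no more forces are possible, and $W^{\emptyset}_-(T)=V(T)\setminus B^{\emptyset}_-(T)$. The skew-nontrivial subgraph $\check G$ of $G$ is obtained by computing $B^{\emptyset}_-(G)$, then deleting each vertex of $B^{\emptyset}_-(G)$ all of whose neighbors are in $B^{\emptyset}_-(G)$, and deleting each edge with both endpoints in $B^{\emptyset}_-(G)$; $T$ is skew-nontrivial if $\check T=T$. The special distance-2 graph $SD_2(T)$ has vertex set $W^{\emptyset}_-(T)$, with $u,w$ adjacent iff $u\ne w$ and $N_T(u)\cap N_T(w)\neq\emptyset$. The 1-subdivision of a graph $H$ is obtained by inserting one new vertex on every edge of $H$. *)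

theory Defs
  imports Main
begin

type_synonym 'a graph = "'a set \<times> 'a set set"

definition verts :: "'a graph \<Rightarrow> 'a set" where "verts G = fst G"
definition edges :: "'a graph \<Rightarrow> 'a set set" where "edges G = snd G"

definition simple_graph :: "'a graph \<Rightarrow> bool" where
  "simple_graph G \<longleftrightarrow> finite (verts G) \<and> (\<forall>e\<in>edges G. e \<subseteq> verts G \<and> card e = 2)"

definition adj :: "'a graph \<Rightarrow> 'a \<Rightarrow> 'a \<Rightarrow> bool" where
  "adj G u v \<longleftrightarrow> {u, v} \<in> edges G"

definition nbhd :: "'a graph \<Rightarrow> 'a \<Rightarrow> 'a set" where
  "nbhd G u = {v \<in> verts G. adj G u v}"

definition connected_graph :: "'a graph \<Rightarrow> bool" where
  "connected_graph G \<longleftrightarrow> verts G \<noteq> {} \<and>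
     (\<forall>u\<in>verts G. \<forall>v\<in>verts G. (u, v) \<in> {(x, y). adj G x y}\<^sup>*)"

definition is_cycle :: "'a graph \<Rightarrow> 'a list \<Rightarrow> bool" where
  "is_cycle G vs \<longleftrightarrow> length vs \<ge> 3 \<and> distinct vs \<and> set vs \<subseteq> verts G \<and>
     (\<forall>i. Suc i < length vs \<longrightarrow> adj G (vs ! i) (vs ! Suc i)) \<and>
     adj G (last vs) (hd vs)"

definition acyclic_graph :: "'a graph \<Rightarrow> bool" where
  "acyclic_graph G \<longleftrightarrow> \<not> (\<exists>vs. is_cycle G vs)"

definition is_tree :: "'a graph \<Rightarrow> bool" where
  "is_tree G \<longleftrightarrow> simple_graph G \<and> connected_graph G \<and> acyclic_graph G"

text \<open>A vertex u (of any colour)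
  forces v when v is its only neighbour not (yet) blue.\<close>
inductive_set skew_closure :: "'a graph \<Rightarrow> 'a set \<Rightarrow> 'a set" for G S where
  init: "x \<in> S \<Longrightarrow> x \<in> skew_closure G S"
| force: "u \<in> verts G \<Longrightarrow> v \<in> nbhd G u \<Longrightarrow>
           (\<forall>w\<in>nbhd G u - {v}. w \<in> skew_closure G S) \<Longrightarrow> v \<in> skew_closure G S"

definition skew_forcing_set :: "'a graph \<Rightarrow> 'a set \<Rightarrow> bool" where
  "skew_forcing_set G S \<longleftrightarrow> S \<subseteq> verts G \<and> verts G \<subseteq> skew_closure G S"

definition Zminus :: "'a graph \<Rightarrow> nat" where
  "Zminus G = (LEAST k. \<exists>S. skew_forcing_set G S \<and> card S = k)"

definition Bempty :: "'a graph \<Rightarrow> 'a set" where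
  "Bempty G = skew_closure G {} \<inter> verts G"

definition Wempty :: "'a graph \<Rightarrow> 'a set" where
  "Wempty G = verts G - Bempty G"

definition skew_check :: "'a graph \<Rightarrow> 'a graph" where
  "skew_check G =
    (verts G - {v \<in> Bempty G. nbhd G v \<subseteq> Bempty G},
     edges G - {e \<in> edges G. e \<subseteq> Bempty G})"

definition skew_nontrivial :: "'a graph \<Rightarrow> bool" where
  "skew_nontrivial G \<longleftrightarrow> skew_check G = G"

definition SD2 :: "'a graph \<Rightarrow> 'a graph" where
  "SD2 T = (Wempty T,
            {{u, w} | u w. u \<in> Wempty T \<and> w \<in> Wempty T \<and> u \<noteq> w \<and>
                           nbhd T u \<inter> nbhd T w \<noteq> {}})"

definition subdivision :: "'b graph \<Rightarrow> ('b + 'b set) graph" where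
  "subdivision H = (Inl ` verts H \<union> Inr ` edges H,
                    {{Inl v, Inr e} | v e. e \<in> edges H \<and> v \<in> e})"

definition graph_iso :: "'a graph \<Rightarrow> 'b graph \<Rightarrow> bool" where
  "graph_iso G H \<longleftrightarrow> (\<exists>f. bij_betw f (verts G) (verts H) \<and>
     (\<forall>u\<in>verts G. \<forall>v\<in>verts G. adj G u v \<longleftrightarrow> adj H (f u) (f v)))"

end

theory Submission
  imports Defs
begin

text \<open>Write B and W for the vertices that do and do not turn blue from the empty set.
  In a skew-nontrivial tree there is no edge inside B and every vertex of B has a neighbour in W.
  A vertex with exactly one white neighbour would force it, so a white vertex with a white
  neighbour has a second one, and the white vertices with white neighbours would contain a
  cycle.  Hence T is bipartite with parts B and W, and every blue vertex has at least two
  neighbours.  All four conditions are equivalent to every blue vertex having degree exactly 2.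
  If it holds, T is the 1-subdivision of SD2(T) with the blue vertices as subdivision vertices,
  a cycle of SD2(T) would give two neighbours of a blue vertex joined by a path avoiding it,
  and one white vertex forces everything along the edges of SD2(T).  If a blue vertex has three
  neighbours, they form a triangle in SD2(T); a single initial vertex misses two of its branches,
  whose white vertices are never forced; and an isomorphism onto a 1-subdivision would make all
  vertices of T have degree at least 2.\<close>

lemma adj_commute: "adj G u v \<longleftrightarrow> adj G v u"
  by (simp add: adj_def insert_commute)

lemma adj_imp_verts:
  assumes "simple_graph G" "adj G u v"
  shows "u \<in> verts G" "v \<in> verts G" "u \<noteq> v"
proof -
  have "{u, v} \<subseteq> verts G" "card {u, v} = 2"
    using assms by (auto simp: simple_graph_def adj_def)
  then show "u \<in> verts G" "v \<in> verts G" "u \<noteq> v" by auto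
qed

lemma in_nbhd_iff_adj: "simple_graph G \<Longrightarrow> v \<in> nbhd G u \<longleftrightarrow> adj G u v"
  unfolding nbhd_def using adj_imp_verts(2)[of G u v] by auto

lemma is_cycle_iff_successively:
  "is_cycle G vs \<longleftrightarrow> 3 \<le> length vs \<and> distinct vs \<and> set vs \<subseteq> verts G \<and>
     successively (adj G) vs \<and> adj G (last vs) (hd vs)"
  by (simp add: is_cycle_def successively_conv_nth)

lemma rtrancl_imp_distinct_walk:
  assumes "(x, y) \<in> r\<^sup>*"
  shows "\<exists>xs. xs \<noteq> [] \<and> hd xs = x \<and> last xs = y \<and> distinct xs \<and>
           successively (\<lambda>a b. (a, b) \<in> r) xs"
  using assms
proof (induction rule: rtrancl_induct)
  case base
  show ?case by (intro exI[of _ "[x]"]) simp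
next
  case (step y z)
  then obtain xs where xs: "xs \<noteq> []" "hd xs = x" "last xs = y" "distinct xs"
    and walk: "successively (\<lambda>a b. (a, b) \<in> r) xs" by blast
  show ?case
  proof (cases "z \<in> set xs")
    case True
    then obtain as bs where "xs = as @ z # bs" by (meson split_list)
    then have xs_eq: "xs = (as @ [z]) @ bs" by simp
    have "hd (as @ [z]) = x" using xs(2) xs_eq by (cases as) auto
    moreover have "successively (\<lambda>a b. (a, b) \<in> r) (as @ [z])"
      using walk xs_eq successively_append_iff by metis
    ultimately show ?thesis
      using xs(4) xs_eq by (intro exI[of _ "as @ [z]"]) simp
  next
    case False
    have "successively (\<lambda>a b. (a, b) \<in> r) (xs @ [z])"
      using walk xs(3) step.hyps(2) by (simp add: successively_append_iff)
    then show ?thesis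
      using xs False by (intro exI[of _ "xs @ [z]"]) simp
  qed
qed

lemma successively_set_tl_subset_Range:
  "successively (\<lambda>a b. (a, b) \<in> r) (x # xs) \<Longrightarrow> set xs \<subseteq> Range r"
  by (induction xs arbitrary: x) auto

definition adj_avoiding :: "'a graph \<Rightarrow> 'a \<Rightarrow> ('a \<times> 'a) set" where
  "adj_avoiding G b = {(x, y). adj G x y \<and> x \<noteq> b \<and> y \<noteq> b}"

lemma adj_avoiding_sym:
  assumes "(x, y) \<in> (adj_avoiding G b)\<^sup>*"
  shows "(y, x) \<in> (adj_avoiding G b)\<^sup>*"
proof -
  have "(adj_avoiding G b)\<inverse> = adj_avoiding G b"
    by (auto simp: adj_avoiding_def adj_commute)
  with rtrancl_converseI[OF assms] show ?thesis by simp
qed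

lemma acyclic_no_path_avoiding:
  assumes sg: "simple_graph G" and ac: "acyclic_graph G"
    and ba: "adj G b a" and ba': "adj G b a'" and "a \<noteq> a'"
  shows "(a, a') \<notin> (adj_avoiding G b)\<^sup>*"
proof
  assume path: "(a, a') \<in> (adj_avoiding G b)\<^sup>*"
  obtain xs where xs: "xs \<noteq> []" "hd xs = a" "last xs = a'" "distinct xs"
    and walk: "successively (\<lambda>x y. (x, y) \<in> adj_avoiding G b) xs"
    using rtrancl_imp_distinct_walk[OF path] by blast
  obtain ys where xs_eq: "xs = a # ys" "ys \<noteq> []"
    using xs \<open>a \<noteq> a'\<close> by (cases xs) (auto split: if_splits)
  have "set ys \<subseteq> Range (adj_avoiding G b)"
    using walk xs_eq(1) successively_set_tl_subset_Range by metis
  moreover have "(a, hd ys) \<in> adj_avoiding G b"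
    using walk xs_eq by (cases ys) auto
  ultimately have b_notin: "b \<notin> set xs" and in_verts: "set xs \<subseteq> verts G"
    using xs_eq(1) adj_imp_verts[OF sg] by (fastforce simp: adj_avoiding_def)+
  have "successively (adj G) xs"
    using walk by (rule successively_mono) (simp add: adj_avoiding_def)
  then have "successively (adj G) (b # xs)"
    using ba xs_eq(1) by simp
  moreover have "adj G (last (b # xs)) (hd (b # xs))"
    using ba' xs by (simp add: adj_commute)
  ultimately have "is_cycle G (b # xs)"
    using xs(4) xs_eq b_notin in_verts adj_imp_verts(1)[OF sg ba]
    by (auto simp: is_cycle_iff_successively Suc_le_eq)
  with ac show False by (auto simp: acyclic_graph_def)
qed

lemma acyclic_common_neighbours_eq:
  assumes sg: "simple_graph G" and ac: "acyclic_graph G"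
    and "adj G x u" "adj G x w" "adj G y u" "adj G y w" "u \<noteq> w"
  shows "x = y"
proof (rule ccontr)
  assume "x \<noteq> y"
  with assms have "is_cycle G [u, x, w, y]"
    using adj_imp_verts[OF sg] by (auto simp: is_cycle_iff_successively adj_commute)
  with ac show False by (auto simp: acyclic_graph_def)
qed

lemma not_acyclic_if_min_degree_two:
  assumes sg: "simple_graph G" and U: "U \<subseteq> verts G" "U \<noteq> {}"
    and two_nbrs: "\<And>x. x \<in> U \<Longrightarrow> \<exists>y z. y \<noteq> z \<and> y \<in> U \<and> z \<in> U \<and> adj G x y \<and> adj G x z"
  shows "\<not> acyclic_graph G"
proof
  assume ac: "acyclic_graph G"
  have long_walk: "\<exists>xs. length xs = n + 2 \<and> distinct xs \<and> set xs \<subseteq> U \<and> successively (adj G) xs" for n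
  proof (induction n)
    case 0
    obtain x where x: "x \<in> U" using U by auto
    then obtain y where "y \<in> U" "adj G x y" using two_nbrs by blast
    with x show ?case
      using adj_imp_verts(3)[OF sg] by (intro exI[of _ "[x, y]"]) auto
  next
    case (Suc n)
    then obtain xs where xs: "length xs = n + 2" "distinct xs" "set xs \<subseteq> U"
      and walk: "successively (adj G) xs" by blast
    obtain y p rs where "rev xs = y # p # rs"
      using xs(1) by (cases "rev xs" rule: remdups_adj.cases) auto
    then have xs_eq: "xs = rev rs @ [p, y]" by (simp add: rev_swap)
    then have "y \<in> U" using xs(3) by auto
    then obtain z where z: "z \<in> U" "adj G y z" "z \<noteq> p" using two_nbrs by metis
    show ?case
    proof (cases "z \<in> set xs")
      case False
      have "successively (adj G) (xs @ [z])"
        using walk z(2) xs_eq by (simp add: successively_append_iff)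
      then show ?thesis
        using xs z(1) False by (intro exI[of _ "xs @ [z]"]) simp
    next
      case True
      moreover have "z \<noteq> y" using z(2) adj_imp_verts(3)[OF sg] by blast
      ultimately have "z \<in> set (rev rs)" using xs_eq z(3) by auto
      then obtain cs ds where "rev rs = cs @ z # ds" by (meson split_list)
      then have xs_cyc: "xs = cs @ (z # ds @ [p, y])" using xs_eq by simp
      have "is_cycle G (z # ds @ [p, y])"
        unfolding is_cycle_iff_successively
        using xs walk U(1) z(2) xs_cyc successively_append_iff[of "adj G" cs]
        by (auto simp: adj_commute)
      with ac show ?thesis by (auto simp: acyclic_graph_def)
    qed
  qed
  obtain xs where xs: "length xs = card U + 2" "distinct xs" "set xs \<subseteq> U"
    using long_walk by blast
  have "finite U" using sg U(1) finite_subset by (auto simp: simple_graph_def)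
  then have "card U + 2 \<le> card U"
    using card_mono distinct_card xs by metis
  then show False by simp
qed

lemma skew_closure_subset: "skew_closure G S \<subseteq> S \<union> verts G"
proof
  fix x assume "x \<in> skew_closure G S"
  then show "x \<in> S \<union> verts G"
    by (induction rule: skew_closure.induct) (auto simp: nbhd_def)
qed

lemma skew_closure_mono:
  assumes "S \<subseteq> S'"
  shows "skew_closure G S \<subseteq> skew_closure G S'"
proof
  fix x assume "x \<in> skew_closure G S"
  then show "x \<in> skew_closure G S'"
    by (induction rule: skew_closure.induct) (use assms in \<open>auto intro: skew_closure.intros\<close>)
qed

lemma Zminus_eq_1_iff:
  assumes fin: "finite (verts G)" and not_empty: "\<not> skew_forcing_set G {}"
  shows "Zminus G = 1 \<longleftrightarrow> (\<exists>s. skew_forcing_set G {s})"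
proof
  assume "Zminus G = 1"
  have "skew_forcing_set G (verts G)"
    by (auto simp: skew_forcing_set_def intro: skew_closure.init)
  then have "\<exists>k S. skew_forcing_set G S \<and> card S = k" by blast
  then have "\<exists>S. skew_forcing_set G S \<and> card S = Zminus G"
    unfolding Zminus_def by (rule LeastI_ex)
  with \<open>Zminus G = 1\<close> show "\<exists>s. skew_forcing_set G {s}"
    by (metis card_1_singletonE)
next
  have nonzero: "card S \<noteq> 0" if "skew_forcing_set G S" for S
    using that not_empty fin finite_subset by (fastforce simp: skew_forcing_set_def)
  assume "\<exists>s. skew_forcing_set G {s}"
  then obtain s where "skew_forcing_set G {s}" ..
  then show "Zminus G = 1"
    unfolding Zminus_def by (intro Least_equality) (auto dest: nonzero intro!: exI[of _ "{s}"])
qed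

lemma verts_SD2: "verts (SD2 T) = Wempty T"
  by (simp add: SD2_def verts_def)

lemma adj_SD2_iff: "adj (SD2 T) x y \<longleftrightarrow>
    x \<in> Wempty T \<and> y \<in> Wempty T \<and> x \<noteq> y \<and> nbhd T x \<inter> nbhd T y \<noteq> {}"
  unfolding adj_def SD2_def edges_def by (auto simp: doubleton_eq_iff)

lemma verts_subdivision: "verts (subdivision H) = Inl ` verts H \<union> Inr ` edges H"
  by (simp add: subdivision_def verts_def)

lemma adj_subdivision_iff: "adj (subdivision H) p q \<longleftrightarrow>
    (\<exists>v e. e \<in> edges H \<and> v \<in> e \<and> {p, q} = {Inl v, Inr e})"
  unfolding adj_def subdivision_def edges_def by auto

lemma adj_subdivision_Inl_iff:
  "adj (subdivision H) p q \<Longrightarrow> p \<in> range Inl \<longleftrightarrow> q \<notin> range Inl"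
  by (auto simp: adj_subdivision_iff doubleton_eq_iff)

lemma adj_subdivision_Inr_iff:
  "adj (subdivision H) (Inr e) q \<longleftrightarrow> e \<in> edges H \<and> q \<in> Inl ` e"
  unfolding adj_subdivision_iff doubleton_eq_iff by blast

lemma subdivision_three_neighbours_imp_Inl:
  assumes "simple_graph H"
    and "adj (subdivision H) x p" "adj (subdivision H) x q" "adj (subdivision H) x r"
    and "p \<noteq> q" "q \<noteq> r" "p \<noteq> r"
  shows "x \<in> range Inl"
proof (rule ccontr)
  assume "x \<notin> range Inl"
  then obtain e where x: "x = Inr e" by (cases x) auto
  then have e: "e \<in> edges H" "{p, q, r} \<subseteq> Inl ` e"
    using assms(2-4) by (auto simp: adj_subdivision_Inr_iff)
  then have card_e: "card e = 2" using assms(1) by (auto simp: simple_graph_def)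
  then have "finite e" by (simp add: card_ge_0_finite)
  then have "card {p, q, r} \<le> 2"
    using surj_card_le e(2) card_e by metis
  with assms(5-7) show False by simp
qed

lemma subdivision_Inr_two_neighbours:
  assumes "simple_graph H" "Inr e \<in> verts (subdivision H)"
  shows "\<exists>p q. p \<noteq> q \<and> p \<in> verts (subdivision H) \<and> q \<in> verts (subdivision H) \<and>
           adj (subdivision H) (Inr e) p \<and> adj (subdivision H) (Inr e) q"
proof -
  have "e \<in> edges H" using assms(2) by (force simp: verts_subdivision)
  then have "card e = 2" "e \<subseteq> verts H" using assms(1) by (simp_all add: simple_graph_def)
  moreover obtain u v where "e = {u, v}" "u \<noteq> v" using \<open>card e = 2\<close> by (meson card_2_iff)
  ultimately show ?thesis
    using \<open>e \<in> edges H\<close> by (intro exI[of _ "Inl u"] exI[of _ "Inl v"])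
      (simp add: adj_subdivision_Inr_iff verts_subdivision)
qed

lemma iso_subdivision_two_neighbours:
  assumes H: "simple_graph H" and bij: "bij_betw f (verts G) (verts (subdivision H))"
    and f_adj: "\<And>u v. u \<in> verts G \<Longrightarrow> v \<in> verts G \<Longrightarrow> adj G u v \<longleftrightarrow> adj (subdivision H) (f u) (f v)"
    and u: "u \<in> verts G" "f u \<notin> range Inl"
  shows "\<exists>y z. y \<noteq> z \<and> y \<in> verts G \<and> z \<in> verts G \<and> adj G u y \<and> adj G u z"
proof -
  obtain e where "f u = Inr e" using u(2) by (cases "f u") auto
  moreover have "f u \<in> verts (subdivision H)" using bij u(1) by (auto simp: bij_betw_def)
  ultimately obtain p q where pq: "p \<noteq> q" "p \<in> verts (subdivision H)" "q \<in> verts (subdivision H)"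
    "adj (subdivision H) (f u) p" "adj (subdivision H) (f u) q"
    using subdivision_Inr_two_neighbours[OF H] by metis
  then obtain y z where "y \<in> verts G" "z \<in> verts G" "p = f y" "q = f z"
    using bij by (metis bij_betw_def imageE)
  with pq u(1) f_adj show ?thesis by metis
qed

locale skew_nontrivial_tree =
  fixes T :: "'a graph"
  assumes tree: "is_tree T" and nontrivial: "skew_nontrivial T"
begin

abbreviation blue :: "'a set" where "blue \<equiv> Bempty T"
abbreviation white :: "'a set" where "white \<equiv> Wempty T"

lemma simple: "simple_graph T" and connected: "connected_graph T" and acyclic: "acyclic_graph T"
  using tree by (auto simp: is_tree_def)

lemma in_nbhd_iff: "v \<in> nbhd T u \<longleftrightarrow> adj T u v"
  by (rule in_nbhd_iff_adj[OF simple])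

lemma blue_subset_verts: "blue \<subseteq> verts T"
  by (auto simp: Bempty_def)

lemma white_iff: "x \<in> white \<longleftrightarrow> x \<in> verts T \<and> x \<notin> blue"
  by (auto simp: Wempty_def)

lemma blue_iff: "x \<in> blue \<longleftrightarrow> x \<in> skew_closure T {}"
  using skew_closure_subset[of T "{}"] by (auto simp: Bempty_def)

lemma blue_not_white: "x \<in> blue \<Longrightarrow> x \<notin> white"
  by (simp add: white_iff)

lemma skew_check_eq: "skew_check T = T"
  using nontrivial by (simp add: skew_nontrivial_def)

lemma blue_adj_imp_white:
  assumes "x \<in> blue" "adj T x y"
  shows "y \<in> white"
proof -
  have no_blue_edge: "edges T - {e \<in> edges T. e \<subseteq> blue} = edges T"
    using arg_cong[OF skew_check_eq, of snd] by (simp add: skew_check_def edges_def)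
  have "y \<notin> blue"
  proof
    assume "y \<in> blue"
    then have "{x, y} \<in> {e \<in> edges T. e \<subseteq> blue}"
      using assms by (simp add: adj_def)
    with no_blue_edge show False by (metis Diff_iff mem_Collect_eq)
  qed
  then show ?thesis using adj_imp_verts(2)[OF simple assms(2)] by (simp add: white_iff)
qed

lemma blue_has_white_neighbour:
  assumes "x \<in> blue"
  obtains y where "adj T x y" "y \<in> white"
proof -
  have "verts T - {v \<in> blue. nbhd T v \<subseteq> blue} = verts T"
    using arg_cong[OF skew_check_eq, of fst] by (simp add: skew_check_def verts_def)
  then have "\<not> nbhd T x \<subseteq> blue"
    using assms blue_subset_verts by (metis (lifting) Diff_iff mem_Collect_eq subsetD)
  then obtain y where "y \<in> nbhd T x" "y \<notin> blue" by blast
  then have "adj T x y" "y \<in> white" by (auto simp: in_nbhd_iff white_iff nbhd_def)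
  then show thesis by (rule that)
qed

text \<open>A vertex with a unique white neighbour would force it.\<close>
lemma exists_other_white_neighbour:
  assumes u: "u \<in> verts T" and uv: "adj T u v" and v: "v \<in> white"
  obtains v' where "adj T u v'" "v' \<noteq> v" "v' \<in> white"
proof -
  have "\<exists>v'. adj T u v' \<and> v' \<noteq> v \<and> v' \<in> white"
  proof (rule ccontr)
    assume none: "\<nexists>v'. adj T u v' \<and> v' \<noteq> v \<and> v' \<in> white"
    have "\<forall>w\<in>nbhd T u - {v}. w \<in> skew_closure T {}"
    proof
      fix w assume "w \<in> nbhd T u - {v}"
      then have "adj T u w" "w \<noteq> v" "w \<in> verts T" by (auto simp: nbhd_def in_nbhd_iff)
      with none show "w \<in> skew_closure T {}" by (auto simp: white_iff blue_iff)
    qed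
    then have "v \<in> skew_closure T {}"
      using u uv by (simp add: in_nbhd_iff skew_closure.force)
    with v show False by (simp add: blue_iff white_iff)
  qed
  then show thesis using that by blast
qed

lemma white_adj_imp_blue:
  assumes "x \<in> white" "adj T x y"
  shows "y \<in> blue"
proof (rule ccontr)
  assume "y \<notin> blue"
  then have "y \<in> white" using adj_imp_verts(2)[OF simple assms(2)] by (simp add: white_iff)
  define U where "U = {x \<in> white. \<exists>y \<in> white. adj T x y}"
  have "\<not> acyclic_graph T"
  proof (rule not_acyclic_if_min_degree_two[OF simple])
    show "U \<subseteq> verts T" by (auto simp: U_def white_iff)
    show "U \<noteq> {}" using assms \<open>y \<in> white\<close> by (auto simp: U_def)
    fix a assume "a \<in> U"
    then obtain b where ab: "a \<in> white" "b \<in> white" "adj T a b" by (auto simp: U_def)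
    then obtain c where c: "adj T a c" "c \<noteq> b" "c \<in> white"
      using exists_other_white_neighbour white_iff by metis
    have "b \<in> U" "c \<in> U" using ab c by (auto simp: U_def adj_commute)
    with ab c show "\<exists>y z. y \<noteq> z \<and> y \<in> U \<and> z \<in> U \<and> adj T a y \<and> adj T a z"
      by blast
  qed
  with acyclic show False by simp
qed

lemma adj_imp_blue_iff_white:
  assumes "adj T x y"
  shows "x \<in> blue \<longleftrightarrow> y \<in> white"
proof
  show "x \<in> blue \<Longrightarrow> y \<in> white" using blue_adj_imp_white assms by blast
  show "y \<in> white \<Longrightarrow> x \<in> blue" using white_adj_imp_blue assms by (simp add: adj_commute)
qed

lemma blue_has_two_white_neighbours:
  assumes "x \<in> blue"
  obtains y z where "y \<noteq> z" "adj T x y" "adj T x z" "y \<in> white" "z \<in> white"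
proof -
  obtain y where y: "adj T x y" "y \<in> white" using blue_has_white_neighbour[OF assms] .
  moreover have "x \<in> verts T" using assms blue_subset_verts by blast
  then obtain z where "adj T x z" "z \<noteq> y" "z \<in> white"
    using exists_other_white_neighbour y by metis
  ultimately show thesis using that by metis
qed

lemma white_nonempty: "white \<noteq> {}"
proof -
  obtain v where v: "v \<in> verts T" using connected by (auto simp: connected_graph_def)
  show ?thesis
  proof (cases "v \<in> blue")
    case True
    then show ?thesis using blue_has_white_neighbour by blast
  qed (use v white_iff in blast)
qed

lemma simple_SD2: "simple_graph (SD2 T)"
proof -
  have "finite white" using simple by (auto simp: Wempty_def simple_graph_def)
  then show ?thesis by (auto simp: simple_graph_def SD2_def edges_def verts_def)
qed

lemma adj_SD2_if_common_neighbour: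
  assumes "c \<in> blue" "adj T c x" "adj T c y" "x \<noteq> y"
  shows "adj (SD2 T) x y"
proof -
  have "c \<in> nbhd T x \<inter> nbhd T y" using assms(2,3) by (simp add: in_nbhd_iff adj_commute)
  then show ?thesis
    unfolding adj_SD2_iff using assms blue_adj_imp_white by blast
qed

lemma connected_SD2: "connected_graph (SD2 T)"
  unfolding connected_graph_def verts_SD2
proof (intro conjI ballI)
  show "white \<noteq> {}" by (rule white_nonempty)
  fix u v assume u: "u \<in> white" and v: "v \<in> white"
  let ?S = "{(x, y). adj (SD2 T) x y}"
  have "(x \<in> white \<longrightarrow> (u, x) \<in> ?S\<^sup>*) \<and> (x \<in> blue \<longrightarrow> (\<forall>w. adj T x w \<longrightarrow> (u, w) \<in> ?S\<^sup>*))"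
    if "(u, x) \<in> {(x, y). adj T x y}\<^sup>*" for x
    using that
  proof (induction rule: rtrancl_induct)
    case base
    then show ?case using u blue_not_white by auto
  next
    case (step y z)
    then have yz: "adj T y z" by simp
    show ?case
    proof (intro conjI impI allI)
      assume "z \<in> white"
      then have "y \<in> blue" using white_adj_imp_blue yz by (simp add: adj_commute)
      then show "(u, z) \<in> ?S\<^sup>*" using step.IH yz by blast
    next
      fix w assume z: "z \<in> blue" and zw: "adj T z w"
      have "y \<in> white" using blue_adj_imp_white[OF z] yz by (simp add: adj_commute)
      then have uy: "(u, y) \<in> ?S\<^sup>*" using step.IH by blast
      show "(u, w) \<in> ?S\<^sup>*"
      proof (cases "w = y")
        case False
        then have "adj (SD2 T) y w"
          using adj_SD2_if_common_neighbour[OF z] yz zw by (simp add: adj_commute)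
        with uy show ?thesis by (simp add: rtrancl.rtrancl_into_rtrancl)
      qed (use uy in simp)
    qed
  qed
  moreover have "(u, v) \<in> {(x, y). adj T x y}\<^sup>*"
    using connected u v by (auto simp: connected_graph_def white_iff)
  ultimately show "(u, v) \<in> ?S\<^sup>*" using v by blast
qed

definition blue_degree_two :: bool where
  "blue_degree_two \<longleftrightarrow> (\<forall>b\<in>blue. card (nbhd T b) = 2)"

lemma blue_degree_two_nbhd_eq:
  assumes "blue_degree_two" "b \<in> blue" "adj T b u" "adj T b w" "u \<noteq> w"
  shows "nbhd T b = {u, w}"
proof -
  have "finite (nbhd T b)"
    using simple finite_subset by (auto simp: simple_graph_def nbhd_def)
  moreover have "{u, w} \<subseteq> nbhd T b" using assms(3,4) by (simp add: in_nbhd_iff)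
  moreover have "card {u, w} = card (nbhd T b)"
    using assms(1,2,5) by (simp add: blue_degree_two_def)
  ultimately show ?thesis by (metis card_subset_eq)
qed

lemma blue_degree_two_nbhdE:
  assumes "blue_degree_two" "b \<in> blue"
  obtains u w where "u \<noteq> w" "u \<in> white" "w \<in> white" "nbhd T b = {u, w}"
  using blue_has_two_white_neighbours[OF assms(2)] blue_degree_two_nbhd_eq[OF assms] by metis

lemma not_blue_degree_twoE:
  assumes "\<not> blue_degree_two"
  obtains b x y z where "b \<in> blue" "adj T b x" "adj T b y" "adj T b z"
    "x \<noteq> y" "y \<noteq> z" "x \<noteq> z"
proof -
  obtain b where b: "b \<in> blue" "card (nbhd T b) \<noteq> 2"
    using assms by (auto simp: blue_degree_two_def)
  then obtain y z where yz: "y \<noteq> z" "adj T b y" "adj T b z"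
    using blue_has_two_white_neighbours by metis
  have "\<not> nbhd T b \<subseteq> {y, z}"
  proof
    assume "nbhd T b \<subseteq> {y, z}"
    then have "nbhd T b = {y, z}" using yz by (auto simp: in_nbhd_iff)
    with b(2) yz(1) show False by simp
  qed
  then obtain x where "x \<in> nbhd T b" "x \<noteq> y" "x \<noteq> z" by blast
  with b yz show thesis using that by (metis in_nbhd_iff)
qed

lemma edges_SD2_eq:
  assumes "blue_degree_two"
  shows "edges (SD2 T) = nbhd T ` blue"
proof (intro equalityI subsetI)
  fix e assume "e \<in> edges (SD2 T)"
  then obtain u w where e: "e = {u, w}" "u \<noteq> w" "u \<in> white" "nbhd T u \<inter> nbhd T w \<noteq> {}"
    by (auto simp: SD2_def edges_def)
  then obtain c where c: "adj T u c" "adj T w c" by (auto simp: in_nbhd_iff)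
  have "c \<in> blue" using white_adj_imp_blue e(3) c(1) by blast
  moreover have "nbhd T c = e"
    using blue_degree_two_nbhd_eq[OF assms \<open>c \<in> blue\<close>] e c by (simp add: adj_commute)
  ultimately show "e \<in> nbhd T ` blue" by blast
next
  fix e assume "e \<in> nbhd T ` blue"
  then obtain b where b: "b \<in> blue" "e = nbhd T b" by blast
  then obtain u w where "u \<noteq> w" "nbhd T b = {u, w}"
    using blue_degree_two_nbhdE[OF assms] by metis
  then have "adj (SD2 T) u w"
    using adj_SD2_if_common_neighbour[OF b(1)] by (simp add: in_nbhd_iff[symmetric])
  then show "e \<in> edges (SD2 T)" using b \<open>nbhd T b = {u, w}\<close> by (simp add: adj_def)
qed

lemma not_acyclic_SD2_if_not_blue_degree_two:
  assumes "\<not> blue_degree_two"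
  shows "\<not> acyclic_graph (SD2 T)"
proof -
  obtain b x y z where b: "b \<in> blue" "adj T b x" "adj T b y" "adj T b z"
    and ne: "x \<noteq> y" "y \<noteq> z" "x \<noteq> z"
    using not_blue_degree_twoE[OF assms] .
  have "is_cycle (SD2 T) [x, y, z]"
    using adj_SD2_if_common_neighbour[OF b(1)] b ne blue_adj_imp_white
    by (auto simp: is_cycle_iff_successively verts_SD2 adj_commute)
  then show ?thesis by (auto simp: acyclic_graph_def)
qed

lemma SD2_walk_imp_path_avoiding:
  assumes c: "c \<in> blue"
    and "successively (adj (SD2 T)) (x # xs)" "set xs \<inter> nbhd T c = {}"
  shows "(x, last (x # xs)) \<in> (adj_avoiding T c)\<^sup>*"
  using assms(2,3)
proof (induction xs arbitrary: x)
  case (Cons y ys)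
  obtain d where d: "adj T x d" "adj T y d" "x \<in> white" "y \<in> white"
    using Cons.prems(1) by (auto simp: adj_SD2_iff in_nbhd_iff)
  have "d \<noteq> c" using Cons.prems(2) d(2) by (auto simp: in_nbhd_iff adj_commute)
  moreover have "x \<noteq> c" "y \<noteq> c" using c d(3,4) blue_not_white by auto
  ultimately have "(x, d) \<in> adj_avoiding T c" "(d, y) \<in> adj_avoiding T c"
    using d(1,2) by (auto simp: adj_avoiding_def adj_commute)
  then have "(x, y) \<in> (adj_avoiding T c)\<^sup>*" by (meson converse_rtrancl_into_rtrancl r_into_rtrancl)
  moreover have "(y, last (y # ys)) \<in> (adj_avoiding T c)\<^sup>*"
    using Cons by simp
  ultimately show ?case by simp
qed simp

lemma acyclic_SD2_if_blue_degree_two: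
  assumes "blue_degree_two"
  shows "acyclic_graph (SD2 T)"
  unfolding acyclic_graph_def
proof
  assume "\<exists>vs. is_cycle (SD2 T) vs"
  then obtain vs where cyc: "is_cycle (SD2 T) vs" by blast
  then obtain v0 v1 rest where vs: "vs = v0 # v1 # rest" "rest \<noteq> []"
    by (auto simp: is_cycle_def Suc_le_length_iff numeral_3_eq_3)
  have walk: "successively (adj (SD2 T)) (v0 # v1 # rest)"
    and closing: "adj (SD2 T) (last rest) v0" and dist: "distinct (v0 # v1 # rest)"
    using cyc vs by (auto simp: is_cycle_iff_successively)
  obtain c where c: "adj T v0 c" "adj T v1 c"
    using walk by (auto simp: adj_SD2_iff in_nbhd_iff)
  have "c \<in> blue" using c walk white_adj_imp_blue by (auto simp: adj_SD2_iff)
  have ne: "v0 \<noteq> v1" using dist by simp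
  have nbhd_c: "nbhd T c = {v0, v1}"
    using blue_degree_two_nbhd_eq[OF assms \<open>c \<in> blue\<close>] c ne by (simp add: adj_commute)
  have "(v1, last rest) \<in> (adj_avoiding T c)\<^sup>*"
    using SD2_walk_imp_path_avoiding[OF \<open>c \<in> blue\<close>, of v1 rest] walk dist vs(2) nbhd_c
    by auto
  moreover have "last rest \<notin> nbhd T c"
    using dist vs(2) nbhd_c last_in_set by fastforce
  then have "(v0, last rest) \<in> (adj_avoiding T c)\<^sup>*"
    using SD2_walk_imp_path_avoiding[OF \<open>c \<in> blue\<close>, of v0 "[last rest]"] closing
    by (simp add: adj_commute)
  ultimately have "(v1, v0) \<in> (adj_avoiding T c)\<^sup>*"
    by (meson adj_avoiding_sym rtrancl_trans)
  with acyclic_no_path_avoiding[OF simple acyclic] c ne show False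
    by (metis adj_commute)
qed

lemma tree_SD2_iff: "is_tree (SD2 T) \<longleftrightarrow> blue_degree_two"
  using simple_SD2 connected_SD2 acyclic_SD2_if_blue_degree_two
    not_acyclic_SD2_if_not_blue_degree_two
  by (auto simp: is_tree_def)

lemma not_skew_forcing_empty: "\<not> skew_forcing_set T {}"
proof
  assume "skew_forcing_set T {}"
  then have "verts T \<subseteq> blue" by (auto simp: skew_forcing_set_def blue_iff)
  with white_nonempty show False by (auto simp: white_iff)
qed

text \<open>The blue common neighbour of two vertices adjacent in SD2(T) has no other
  neighbours, so it forces either one as soon as the other is blue.\<close>
lemma skew_forcing_white_singleton:
  assumes "blue_degree_two" "w \<in> white"
  shows "skew_forcing_set T {w}"
proof -
  let ?C = "skew_closure T {w}"
  have "blue \<subseteq> ?C" using skew_closure_mono[of "{}" "{w}" T] by (auto simp: blue_iff)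
  have "x \<in> ?C" if "(w, x) \<in> {(x, y). adj (SD2 T) x y}\<^sup>*" for x
    using that
  proof (induction rule: rtrancl_induct)
    case base
    show ?case by (rule skew_closure.init) simp
  next
    case (step y z)
    then obtain c where c: "adj T y c" "adj T z c" "y \<in> white" "y \<noteq> z"
      by (auto simp: adj_SD2_iff in_nbhd_iff)
    have "c \<in> blue" using white_adj_imp_blue c by blast
    then have "nbhd T c = {y, z}"
      using blue_degree_two_nbhd_eq[OF assms(1)] c by (simp add: adj_commute)
    then show ?case
      using skew_closure.force[of c T z "{w}"] step.IH \<open>c \<in> blue\<close> blue_subset_verts by auto
  qed
  moreover have "(w, x) \<in> {(x, y). adj (SD2 T) x y}\<^sup>*" if "x \<in> white" for x
    using connected_SD2 assms(2) that by (auto simp: connected_graph_def verts_SD2)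
  ultimately have "verts T \<subseteq> ?C" using \<open>blue \<subseteq> ?C\<close> white_iff by blast
  then show ?thesis using assms(2) by (simp add: skew_forcing_set_def white_iff)
qed

text \<open>The white vertices of the branches of T at b through p and q are never forced: b has
  two of them as neighbours, and any other vertex adjacent to one of them has a second white
  neighbour in the same branch.\<close>
lemma not_skew_forcing_singleton_if_branches_avoid:
  assumes b: "b \<in> blue" and p: "adj T b p" and q: "adj T b q" and "p \<noteq> q"
    and sp: "(p, s) \<notin> (adj_avoiding T b)\<^sup>*" and sq: "(q, s) \<notin> (adj_avoiding T b)\<^sup>*"
  shows "\<not> skew_forcing_set T {s}"
proof
  assume forcing: "skew_forcing_set T {s}"
  define Y where "Y = {x \<in> white. (p, x) \<in> (adj_avoiding T b)\<^sup>* \<or> (q, x) \<in> (adj_avoiding T b)\<^sup>*}"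
  have "p \<in> Y" "q \<in> Y" using blue_adj_imp_white b p q by (auto simp: Y_def)
  have "x \<notin> Y" if "x \<in> skew_closure T {s}" for x
    using that
  proof (induction rule: skew_closure.induct)
    case (init x)
    then show ?case using sp sq by (auto simp: Y_def)
  next
    case (force u v)
    show ?case
    proof
      assume "v \<in> Y"
      have others: "w \<notin> Y" if "adj T u w" "w \<noteq> v" for w
        using force.IH that by (auto simp: in_nbhd_iff)
      have uv: "adj T u v" using force.hyps(2) by (simp add: in_nbhd_iff)
      show False
      proof (cases "u = b")
        case True
        then show False using others[of p] others[of q] p q \<open>p \<noteq> q\<close> \<open>p \<in> Y\<close> \<open>q \<in> Y\<close> by auto
      next
        case False
        have "v \<in> white" using \<open>v \<in> Y\<close> by (simp add: Y_def)
        then obtain v' where v': "adj T u v'" "v' \<noteq> v" "v' \<in> white"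
          using exists_other_white_neighbour force.hyps(1) uv by metis
        have "v \<noteq> b" "v' \<noteq> b" using b blue_not_white \<open>v \<in> white\<close> v'(3) by auto
        then have "(v, u) \<in> adj_avoiding T b" "(u, v') \<in> adj_avoiding T b"
          using uv v'(1) False by (auto simp: adj_avoiding_def adj_commute)
        then have "(v, v') \<in> (adj_avoiding T b)\<^sup>*"
          by (meson converse_rtrancl_into_rtrancl r_into_rtrancl)
        then have "v' \<in> Y" using \<open>v \<in> Y\<close> v'(3) unfolding Y_def by (auto intro: rtrancl_trans)
        with others v' show False by blast
      qed
    qed
  qed
  moreover have "p \<in> skew_closure T {s}"
    using forcing adj_imp_verts(2)[OF simple p] by (auto simp: skew_forcing_set_def)
  ultimately show False using \<open>p \<in> Y\<close> by blast
qed

lemma not_skew_forcing_singleton_if_not_blue_degree_two: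
  assumes "\<not> blue_degree_two"
  shows "\<not> skew_forcing_set T {s}"
proof -
  obtain b x y z where b: "b \<in> blue" "adj T b x" "adj T b y" "adj T b z"
    and ne: "x \<noteq> y" "y \<noteq> z" "x \<noteq> z"
    using not_blue_degree_twoE[OF assms] .
  have at_most_one_reaches: False
    if "adj T b a" "adj T b a'" "a \<noteq> a'"
      "(a, s) \<in> (adj_avoiding T b)\<^sup>*" "(a', s) \<in> (adj_avoiding T b)\<^sup>*" for a a'
    using acyclic_no_path_avoiding[OF simple acyclic that(1-3)] that(4,5)
    by (meson adj_avoiding_sym rtrancl_trans)
  show ?thesis
  proof (cases "(x, s) \<in> (adj_avoiding T b)\<^sup>*")
    case True
    then show ?thesis
      using not_skew_forcing_singleton_if_branches_avoid[OF b(1,3,4) ne(2)] at_most_one_reaches b ne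
      by metis
  next
    case False
    then show ?thesis
      using not_skew_forcing_singleton_if_branches_avoid[OF b(1,2,3) ne(1)]
        not_skew_forcing_singleton_if_branches_avoid[OF b(1,2,4) ne(3)] at_most_one_reaches b ne
      by metis
  qed
qed

lemma Zminus_eq_1_iff_blue_degree_two: "Zminus T = 1 \<longleftrightarrow> blue_degree_two"
proof -
  have "finite (verts T)" using simple by (simp add: simple_graph_def)
  then have "Zminus T = 1 \<longleftrightarrow> (\<exists>s. skew_forcing_set T {s})"
    using Zminus_eq_1_iff not_skew_forcing_empty by blast
  also have "\<dots> \<longleftrightarrow> blue_degree_two"
    using skew_forcing_white_singleton not_skew_forcing_singleton_if_not_blue_degree_two
      white_nonempty by blast
  finally show ?thesis .
qed

definition subdivision_map :: "'a \<Rightarrow> 'a + 'a set" where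
  "subdivision_map x = (if x \<in> blue then Inr (nbhd T x) else Inl x)"

lemma inj_on_subdivision_map:
  assumes "blue_degree_two"
  shows "inj_on subdivision_map (verts T)"
proof (rule inj_onI)
  fix x y assume "x \<in> verts T" "y \<in> verts T" and eq: "subdivision_map x = subdivision_map y"
  show "x = y"
  proof (cases "x \<in> blue")
    case True
    with eq have "y \<in> blue" "nbhd T x = nbhd T y"
      by (auto simp: subdivision_map_def split: if_splits)
    moreover obtain u w where "u \<noteq> w" "nbhd T x = {u, w}"
      using blue_degree_two_nbhdE[OF assms True] by metis
    ultimately have "adj T x u" "adj T x w" "adj T y u" "adj T y w"
      by (auto simp: in_nbhd_iff[symmetric])
    then show ?thesis using acyclic_common_neighbours_eq[OF simple acyclic] \<open>u \<noteq> w\<close> by blast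
  next
    case False
    with eq show ?thesis by (auto simp: subdivision_map_def split: if_splits)
  qed
qed

lemma image_subdivision_map:
  assumes "blue_degree_two"
  shows "subdivision_map ` verts T = verts (subdivision (SD2 T))"
proof -
  have "verts T = white \<union> blue" using blue_subset_verts by (auto simp: white_iff)
  moreover have "subdivision_map ` white = Inl ` white"
    by (rule image_cong) (simp_all add: subdivision_map_def white_iff)
  moreover have "subdivision_map ` blue = Inr ` nbhd T ` blue"
    unfolding image_comp by (rule image_cong) (simp_all add: subdivision_map_def)
  ultimately show ?thesis
    by (simp add: verts_subdivision verts_SD2 edges_SD2_eq[OF assms] image_Un)
qed

lemma adj_subdivision_map_iff:
  assumes "blue_degree_two" and x: "x \<in> verts T" and y: "y \<in> verts T"
  shows "adj (subdivision (SD2 T)) (subdivision_map x) (subdivision_map y) \<longleftrightarrow> adj T x y"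
proof -
  let ?S = "subdivision (SD2 T)"
  have blue_white: "adj ?S (subdivision_map b) (subdivision_map v) \<longleftrightarrow> adj T b v"
    if "b \<in> blue" "v \<in> white" for b v
  proof -
    have "subdivision_map b = Inr (nbhd T b)" "subdivision_map v = Inl v"
      using that by (simp_all add: subdivision_map_def white_iff)
    moreover have "nbhd T b \<in> edges (SD2 T)" using that(1) edges_SD2_eq[OF assms(1)] by simp
    ultimately show ?thesis by (simp add: adj_subdivision_Inr_iff image_iff in_nbhd_iff)
  qed
  consider "x \<in> blue" "y \<in> blue" | "x \<in> blue" "y \<in> white" | "x \<in> white" "y \<in> blue"
    | "x \<in> white" "y \<in> white"
    using x y white_iff by blast
  then show ?thesis
  proof cases
    case 1
    then have "\<not> adj T x y" using blue_adj_imp_white[OF 1(1)] blue_not_white by blast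
    moreover have "\<not> adj ?S (subdivision_map x) (subdivision_map y)"
      using 1 by (simp add: subdivision_map_def adj_subdivision_Inr_iff image_iff)
    ultimately show ?thesis by blast
  next
    case 2
    then show ?thesis by (rule blue_white)
  next
    case 3
    then show ?thesis
      using blue_white[OF 3(2,1)]
      by (simp add: adj_commute[of T x y] adj_commute[of ?S "subdivision_map x"])
  next
    case 4
    then have "\<not> adj T x y" using white_adj_imp_blue[OF 4(1)] blue_not_white by blast
    moreover have "\<not> adj ?S (subdivision_map x) (subdivision_map y)"
      using 4 adj_subdivision_Inl_iff[of "SD2 T" "Inl x" "Inl y"]
      by (auto simp: subdivision_map_def white_iff)
    ultimately show ?thesis by blast
  qed
qed

lemma graph_iso_subdivision_SD2:
  assumes "blue_degree_two"
  shows "graph_iso T (subdivision (SD2 T))"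
  unfolding graph_iso_def bij_betw_def
  using inj_on_subdivision_map[OF assms] image_subdivision_map[OF assms]
    adj_subdivision_map_iff[OF assms]
  by metis

lemma blue_iff_Inl_if_iso:
  assumes f_adj: "\<And>u v. u \<in> verts T \<Longrightarrow> v \<in> verts T \<Longrightarrow> adj T u v \<longleftrightarrow> adj (subdivision H) (f u) (f v)"
    and b: "b \<in> blue" "f b \<in> range Inl" and u: "u \<in> verts T"
  shows "u \<in> blue \<longleftrightarrow> f u \<in> range Inl"
proof -
  have "(b, u) \<in> {(x, y). adj T x y}\<^sup>*"
    using connected b(1) u blue_subset_verts by (auto simp: connected_graph_def)
  then show ?thesis
  proof (induction rule: rtrancl_induct)
    case base
    then show ?case using b by simp
  next
    case (step v w)
    then have vw: "adj T v w" by simp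
    have "v \<in> blue \<longleftrightarrow> w \<notin> blue"
      using adj_imp_blue_iff_white[OF vw] adj_imp_verts(2)[OF simple vw] white_iff by blast
    moreover have "f v \<in> range Inl \<longleftrightarrow> f w \<notin> range Inl"
      using adj_subdivision_Inl_iff f_adj vw adj_imp_verts[OF simple vw] by blast
    ultimately show ?case using step.IH by blast
  qed
qed

text \<open>A blue vertex of degree at least 3 must be an original vertex of the subdivision; then
  all blue vertices are original vertices, the white ones are subdivision vertices of degree 2,
  and T would have minimum degree 2.\<close>
lemma blue_degree_two_if_iso_subdivision:
  assumes H: "simple_graph H" and iso: "graph_iso T (subdivision H)"
  shows blue_degree_two
proof (rule ccontr)
  assume "\<not> blue_degree_two"
  then obtain b x y z where b: "b \<in> blue" "adj T b x" "adj T b y" "adj T b z"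
    and ne: "x \<noteq> y" "y \<noteq> z" "x \<noteq> z"
    using not_blue_degree_twoE by metis
  obtain f where bij: "bij_betw f (verts T) (verts (subdivision H))"
    and f_adj: "\<And>u v. u \<in> verts T \<Longrightarrow> v \<in> verts T \<Longrightarrow> adj T u v \<longleftrightarrow> adj (subdivision H) (f u) (f v)"
    using iso unfolding graph_iso_def by blast
  have V: "b \<in> verts T" "x \<in> verts T" "y \<in> verts T" "z \<in> verts T"
    using b adj_imp_verts[OF simple] by blast+
  then have "f x \<noteq> f y" "f y \<noteq> f z" "f x \<noteq> f z"
    using bij ne by (metis bij_betw_def inj_on_eq_iff)+
  then have "f b \<in> range Inl"
    using subdivision_three_neighbours_imp_Inl[OF H] f_adj b V by metis
  have "\<exists>y z. y \<noteq> z \<and> y \<in> verts T \<and> z \<in> verts T \<and> adj T u y \<and> adj T u z"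
    if u: "u \<in> verts T" for u
  proof (cases "u \<in> blue")
    case True
    then show ?thesis using blue_has_two_white_neighbours white_iff by metis
  next
    case False
    then have "f u \<notin> range Inl"
      using blue_iff_Inl_if_iso[OF f_adj b(1) \<open>f b \<in> range Inl\<close> u] by simp
    then show ?thesis using iso_subdivision_two_neighbours[OF H bij f_adj u] by blast
  qed
  then have "\<not> acyclic_graph T"
    using not_acyclic_if_min_degree_two[OF simple order.refl] V(1) by blast
  with acyclic show False by simp
qed

end

theorem theorem6p9:
  fixes T :: "'a graph"
  assumes "is_tree T" and "skew_nontrivial T"
  shows "(Zminus T = 1 \<longleftrightarrow> is_tree (SD2 T)) \<and>
         (is_tree (SD2 T) \<longleftrightarrow> (\<exists>H :: 'a graph. is_tree H \<and> graph_iso T (subdivision H))) \<and>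
         ((\<exists>H :: 'a graph. is_tree H \<and> graph_iso T (subdivision H)) \<longleftrightarrow>
            graph_iso T (subdivision (SD2 T)))"
proof -
  interpret skew_nontrivial_tree T using assms by unfold_locales
  have "(\<exists>H :: 'a graph. is_tree H \<and> graph_iso T (subdivision H)) \<longleftrightarrow> blue_degree_two"
  proof
    assume "\<exists>H :: 'a graph. is_tree H \<and> graph_iso T (subdivision H)"
    then obtain H :: "'a graph" where "is_tree H" "graph_iso T (subdivision H)" by blast
    then show blue_degree_two using blue_degree_two_if_iso_subdivision[of H] by (simp add: is_tree_def)
  next
    assume blue_degree_two
    then show "\<exists>H :: 'a graph. is_tree H \<and> graph_iso T (subdivision H)"
      using graph_iso_subdivision_SD2 tree_SD2_iff by (intro exI[of _ "SD2 T"]) simp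
  qed
  moreover have "graph_iso T (subdivision (SD2 T)) \<longleftrightarrow> blue_degree_two"
    using graph_iso_subdivision_SD2 blue_degree_two_if_iso_subdivision[OF simple_SD2] by blast
  ultimately show ?thesis
    using Zminus_eq_1_iff_blue_degree_two tree_SD2_iff by simp
qed

end
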